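(* Let $k\ge 2$ and let $P\subset\mathbb{R}^k$ be a finite point set with properties $a_1,\dots,a_k\colon P\to\{-1,1\}$, each strictly linearly separable on $P$, such that all $2^k$ possible labels occur in $P$. For $i=2,\dots,k$ let $H_i$ be a hyperplane strictly separating $P^i_-$ from $P^i_+$, with normal $v_i$. Then for every unit vector $w\in\mathbb{R}^k$ with $w\cdot v_i=0$ for all $i=2,\dots,k$, the projected sets $P'_-$ and $P'_+$ are not strictly linearly separable in $w^\perp$.
   Context: $P^i_{\pm}=\{p\in P: a_i(p)=\pm1\}$, $P_\pm=P^1_\pm$; the label of $p$ is $(a_1(p),\dots,a_k(p))$. Projection along a unit vector $w$: $p'=p-(p\cdot w)w$, and $X'$ denotes the image of $X$. Finite sets $X,Y$ in a linear subspace $L$ are strictly linearly separable (in $L$) if there exist a unit $v\in L$ and $c\in\mathbb{R}$ with $v\cdot x<c<v\cdot y$ for all $x\in X$, $y\in Y$. *)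

theory Defs
  imports "HOL-Analysis.Analysis"
begin

definition strictly_lin_sep :: "('a::real_inner) set \<Rightarrow> 'a set \<Rightarrow> 'a set \<Rightarrow> bool" where
  "strictly_lin_sep L X Y \<longleftrightarrow>
     (\<exists>v c. v \<in> L \<and> norm v = 1 \<and> (\<forall>x\<in>X. v \<bullet> x < c) \<and> (\<forall>y\<in>Y. c < v \<bullet> y))"

definition proj_along :: "('a::real_inner) \<Rightarrow> 'a \<Rightarrow> 'a" where
  "proj_along w p = p - (p \<bullet> w) *\<^sub>R w"

definition part_minus :: "(nat \<Rightarrow> 'a \<Rightarrow> int) \<Rightarrow> nat \<Rightarrow> 'a set \<Rightarrow> 'a set" where
  "part_minus a i P = {p\<in>P. a i p = -1}"

definition part_plus :: "(nat \<Rightarrow> 'a \<Rightarrow> int) \<Rightarrow> nat \<Rightarrow> 'a set \<Rightarrow> 'a set" where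
  "part_plus a i P = {p\<in>P. a i p = 1}"

end

theory Submission
  imports Defs
begin

text \<open>
  Suppose the projections of \<open>P\<^sub>-\<close> and \<open>P\<^sub>+\<close> were separated in \<open>w\<^sup>\<bottom>\<close> by a normal \<open>u\<close>.
  Since \<open>u \<bullet> p' = u \<bullet> p\<close>, the vectors \<open>u, v\<^sub>2, \<dots>, v\<^sub>k\<close> are then \<open>k\<close> normals of hyperplanes
  separating the properties \<open>a\<^sub>1, \<dots>, a\<^sub>k\<close> on \<open>P\<close>, all lying in the \<open>(k-1)\<close>-dimensional space
  \<open>w\<^sup>\<bottom>\<close>; so they satisfy a nontrivial relation \<open>\<Sum> \<mu>\<^sub>i g\<^sub>i = 0\<close>. Choosing \<open>p \<in> P\<close> with
  label \<open>sgn \<mu>\<close> and \<open>q \<in> P\<close> with the opposite label gives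
  \<open>0 < \<Sum> \<mu>\<^sub>i (g\<^sub>i \<bullet> p - g\<^sub>i \<bullet> q) = (\<Sum> \<mu>\<^sub>i g\<^sub>i) \<bullet> (p - q) = 0\<close>.
\<close>

definition separates_by_sign :: "'a::real_inner \<Rightarrow> real \<Rightarrow> ('a \<Rightarrow> int) \<Rightarrow> 'a set \<Rightarrow> bool" where
  "separates_by_sign g c f P \<longleftrightarrow> (\<forall>p\<in>P. (f p = -1 \<longrightarrow> g \<bullet> p < c) \<and> (f p = 1 \<longrightarrow> c < g \<bullet> p))"

lemma separates_by_sign_less:
  assumes "separates_by_sign g c f P" "p \<in> P" "q \<in> P" "f p = 1" "f q = -1"
  shows "g \<bullet> q < g \<bullet> p"
proof -
  have "g \<bullet> q < c" "c < g \<bullet> p"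
    using assms unfolding separates_by_sign_def by auto
  then show ?thesis by linarith
qed

lemma separates_by_sign_if_separating_parts:
  assumes "(\<forall>x\<in>part_minus a i P. g \<bullet> x < c) \<and> (\<forall>y\<in>part_plus a i P. c < g \<bullet> y)"
  shows "separates_by_sign g c (a i) P"
  using assms by (auto simp: separates_by_sign_def part_minus_def part_plus_def)

lemma exists_orthogonal_separating_normal_if_separates_parts:
  assumes orth: "w \<bullet> v = 0"
    and "\<exists>c. ((\<forall>x\<in>part_minus a i P. v \<bullet> x < c) \<and> (\<forall>y\<in>part_plus a i P. c < v \<bullet> y)) \<or>
             ((\<forall>x\<in>part_plus a i P. v \<bullet> x < c) \<and> (\<forall>y\<in>part_minus a i P. c < v \<bullet> y))"
  shows "\<exists>g c. w \<bullet> g = 0 \<and> separates_by_sign g c (a i) P"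
proof -
  from assms(2) obtain c where
    "((\<forall>x\<in>part_minus a i P. v \<bullet> x < c) \<and> (\<forall>y\<in>part_plus a i P. c < v \<bullet> y)) \<or>
     ((\<forall>x\<in>part_plus a i P. (- v) \<bullet> x > - c) \<and> (\<forall>y\<in>part_minus a i P. - c > (- v) \<bullet> y))"
    by auto
  then show ?thesis
  proof (elim disjE)
    assume "(\<forall>x\<in>part_minus a i P. v \<bullet> x < c) \<and> (\<forall>y\<in>part_plus a i P. c < v \<bullet> y)"
    then show ?thesis
      using orth separates_by_sign_if_separating_parts by blast
  next
    assume "(\<forall>x\<in>part_plus a i P. (- v) \<bullet> x > - c) \<and> (\<forall>y\<in>part_minus a i P. - c > (- v) \<bullet> y)"
    moreover have "w \<bullet> - v = 0" using orth by simp
    ultimately show ?thesis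
      using separates_by_sign_if_separating_parts by blast
  qed
qed

lemma inner_proj_along_orthogonal:
  assumes "u \<bullet> w = 0"
  shows "u \<bullet> proj_along w x = u \<bullet> x"
  using assms by (simp add: proj_along_def inner_diff_right)

lemma exists_orthogonal_separating_normal_if_separates_projections:
  assumes "strictly_lin_sep {x. x \<bullet> w = 0} (proj_along w ` part_minus a i P) (proj_along w ` part_plus a i P)"
  shows "\<exists>u c. w \<bullet> u = 0 \<and> separates_by_sign u c (a i) P"
proof -
  obtain u c where u: "u \<bullet> w = 0"
      "\<forall>x\<in>part_minus a i P. u \<bullet> proj_along w x < c"
      "\<forall>y\<in>part_plus a i P. c < u \<bullet> proj_along w y"
    using assms unfolding strictly_lin_sep_def by auto
  then have "separates_by_sign u c (a i) P"
    using inner_proj_along_orthogonal[OF u(1)]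
    by (auto simp: separates_by_sign_def part_minus_def part_plus_def)
  with u(1) show ?thesis by (auto simp: inner_commute)
qed

lemma exists_nontrivial_relation_if_dim_less:
  fixes g :: "nat \<Rightarrow> 'a::euclidean_space"
  assumes gS: "\<forall>i\<in>{1..m}. g i \<in> S" and dS: "dim S < m"
  shows "\<exists>\<mu>. (\<exists>i\<in>{1..m}. \<mu> i \<noteq> 0) \<and> (\<Sum>i\<in>{1..m}. \<mu> i *\<^sub>R g i) = 0"
proof (cases "inj_on g {1..m}")
  case False
  then obtain i j where ij: "i \<in> {1..m}" "j \<in> {1..m}" "i \<noteq> j" "g i = g j"
    unfolding inj_on_def by blast
  define \<mu> where "\<mu> = (\<lambda>x::nat. if x = i then (1::real) else if x = j then -1 else 0)"
  have summand: "\<mu> x *\<^sub>R g x = (if x = i then g i else 0) - (if x = j then g j else 0)" for x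
    using ij(3) by (simp add: \<mu>_def)
  have "(\<Sum>x\<in>{1..m}. \<mu> x *\<^sub>R g x) = 0"
    unfolding summand sum_subtractf using ij by simp
  moreover have "\<mu> i \<noteq> 0" by (simp add: \<mu>_def)
  ultimately show ?thesis using ij(1) by blast
next
  case True
  let ?B = "g ` {1..m}"
  have "dependent ?B"
  proof (rule ccontr)
    assume "independent ?B"
    moreover have "?B \<subseteq> S" using gS by blast
    ultimately have "card ?B \<le> dim S"
      using independent_card_le_dim by blast
    then show False using True dS by (simp add: card_image)
  qed
  then obtain u where u: "\<exists>v\<in>?B. u v \<noteq> 0" "(\<Sum>v\<in>?B. u v *\<^sub>R v) = 0"
    using dependent_finite[of ?B] by auto
  have "(\<Sum>i\<in>{1..m}. u (g i) *\<^sub>R g i) = 0"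
    using u(2) sum.reindex[OF True, of "\<lambda>v. u v *\<^sub>R v"] by (simp add: o_def)
  moreover have "\<exists>i\<in>{1..m}. u (g i) \<noteq> 0" using u(1) by blast
  ultimately show ?thesis by (intro exI[of _ "\<lambda>i. u (g i)"]) simp
qed

lemma sum_separating_normals_nonzero:
  fixes g :: "nat \<Rightarrow> 'a::real_inner"
  assumes fin: "finite I"
    and separates: "\<forall>i\<in>I. separates_by_sign (g i) (c i) (a i) P"
    and labels: "\<forall>s. (\<forall>i\<in>I. s i \<in> {-1, 1}) \<longrightarrow> (\<exists>p\<in>P. \<forall>i\<in>I. a i p = s i)"
    and nontrivial: "j \<in> I" "\<mu> j \<noteq> 0"
  shows "(\<Sum>i\<in>I. \<mu> i *\<^sub>R g i) \<noteq> 0"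
proof
  assume relation: "(\<Sum>i\<in>I. \<mu> i *\<^sub>R g i) = 0"
  define s where "s i = (if \<mu> i \<ge> 0 then (1::int) else -1)" for i
  have "\<forall>i\<in>I. s i \<in> {-1, 1}" and "\<forall>i\<in>I. - s i \<in> {-1, 1}"
    by (auto simp: s_def)
  then obtain p q where p: "p \<in> P" "\<forall>i\<in>I. a i p = s i" and q: "q \<in> P" "\<forall>i\<in>I. a i q = - s i"
    using labels[rule_format, of s] labels[rule_format, of "\<lambda>i. - s i"] by auto
  have oriented: "0 < \<mu> i * (g i \<bullet> p - g i \<bullet> q)" if i: "i \<in> I" and "\<mu> i \<noteq> 0" for i
  proof (cases "\<mu> i \<ge> 0")
    case True
    then have "a i p = 1" "a i q = -1" using p q i by (simp_all add: s_def)
    then have "g i \<bullet> q < g i \<bullet> p"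
      using separates_by_sign_less separates i p q by blast
    then show ?thesis using True \<open>\<mu> i \<noteq> 0\<close> by simp
  next
    case False
    then have "a i q = 1" "a i p = -1" using p q i by (simp_all add: s_def)
    then have "g i \<bullet> p < g i \<bullet> q"
      using separates_by_sign_less separates i p q by blast
    then show ?thesis using False by (simp add: mult_neg_neg)
  qed
  have nonneg: "0 \<le> \<mu> i * (g i \<bullet> p - g i \<bullet> q)" if "i \<in> I" for i
    using oriented[OF that] by (cases "\<mu> i = 0") auto
  have "0 < (\<Sum>i\<in>I. \<mu> i * (g i \<bullet> p - g i \<bullet> q))"
    by (rule sum_pos2[where f = "\<lambda>i. \<mu> i * (g i \<bullet> p - g i \<bullet> q)", OF fin nontrivial(1)])
      (simp_all add: oriented[OF nontrivial] nonneg)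
  also have "\<dots> = (\<Sum>i\<in>I. \<mu> i *\<^sub>R g i) \<bullet> (p - q)"
    by (simp add: inner_sum_left inner_diff_right right_diff_distrib sum_subtractf)
  finally show False using relation by simp
qed

theorem mainTheorem4:
  fixes P :: "(real^'n) set"
    and a :: "nat \<Rightarrow> real^'n \<Rightarrow> int"
    and v :: "nat \<Rightarrow> real^'n"
    and w :: "real^'n"
  assumes k2: "CARD('n) \<ge> 2"
    and finP: "finite P"
    and vals: "\<forall>i\<in>{1..CARD('n)}. \<forall>p\<in>P. a i p \<in> {-1, 1}"
    and sep: "\<forall>i\<in>{1..CARD('n)}. strictly_lin_sep UNIV (part_minus a i P) (part_plus a i P)"
    and labels: "\<forall>s::nat \<Rightarrow> int. (\<forall>i\<in>{1..CARD('n)}. s i \<in> {-1, 1}) \<longrightarrow>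
                   (\<exists>p\<in>P. \<forall>i\<in>{1..CARD('n)}. a i p = s i)"
    and hyp: "\<forall>i\<in>{2..CARD('n)}. v i \<noteq> 0 \<and> (\<exists>c.
                 ((\<forall>x\<in>part_minus a i P. v i \<bullet> x < c) \<and> (\<forall>y\<in>part_plus a i P. c < v i \<bullet> y)) \<or>
                 ((\<forall>x\<in>part_plus a i P. v i \<bullet> x < c) \<and> (\<forall>y\<in>part_minus a i P. c < v i \<bullet> y)))"
    and wunit: "norm w = 1"
    and worth: "\<forall>i\<in>{2..CARD('n)}. w \<bullet> v i = 0"
  shows "\<not> strictly_lin_sep {x. x \<bullet> w = 0}
            (proj_along w ` part_minus a 1 P) (proj_along w ` part_plus a 1 P)"
proof
  let ?k = "CARD('n)"
  assume proj_sep: "strictly_lin_sep {x. x \<bullet> w = 0}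
            (proj_along w ` part_minus a 1 P) (proj_along w ` part_plus a 1 P)"
  have "\<exists>g c. w \<bullet> g = 0 \<and> separates_by_sign g c (a i) P" if "i \<in> {1..?k}" for i
  proof (cases "i = 1")
    case True
    then show ?thesis
      using exists_orthogonal_separating_normal_if_separates_projections[OF proj_sep] by simp
  next
    case False
    with that have "i \<in> {2..?k}" by simp
    then show ?thesis
      using exists_orthogonal_separating_normal_if_separates_parts[of w "v i"] hyp worth by blast
  qed
  then obtain g c where g: "\<And>i. i \<in> {1..?k} \<Longrightarrow> w \<bullet> g i = 0 \<and> separates_by_sign (g i) (c i) (a i) P"
    by metis
  have "w \<noteq> 0" using wunit by auto
  then have "dim {x. w \<bullet> x = 0} < ?k"
    using dim_hyperplane[of w] k2 by simp
  moreover have "\<forall>i\<in>{1..?k}. g i \<in> {x. w \<bullet> x = 0}"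
    using g by blast
  ultimately obtain \<mu> where "\<exists>j\<in>{1..?k}. \<mu> j \<noteq> 0" "(\<Sum>i\<in>{1..?k}. \<mu> i *\<^sub>R g i) = 0"
    using exists_nontrivial_relation_if_dim_less by blast
  moreover have "\<forall>i\<in>{1..?k}. separates_by_sign (g i) (c i) (a i) P"
    using g by blast
  ultimately show False
    using sum_separating_normals_nonzero[OF finite_atLeastAtMost _ labels] by blast
qed

end
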